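(* Let $(U_n)_{n\ge0}$ be a linear recurrence sequence of order $k\ge2$ with integer coefficients having a dominant root $\alpha_1$ (i.e. $|\alpha_1|>|\alpha_j|$ for all other roots $\alpha_j$ of its characteristic polynomial). Let $a,b$ be positive integers, $r\ge1$ and $\varepsilon>0$. Let $(n,m,z_1,\dots,z_r)$ with integers $n\ge m\ge 0$, $n\ge1$, and $z_1,\dots,z_r\in\mathcal U_S$, $z_r\neq0$, be a solution of $aU_n+bU_m=z_1+\cdots+z_r$ such that $|z_i|^{1+\varepsilon}\le |z_r|$ for $1\le i\le r-1$. Then $$\log|z_r|<c_7 n+c_8,$$ where $c_7,c_8$ are effectively computable constants depending only on $\varepsilon,\gamma,r,k,a,b$.
   Context: A linear recurrence sequence of order $k$ is defined by $U_n=a_1U_{n-1}+\cdots+a_kU_{n-k}$ with $a_1,\dots,a_k\in\mathbb Z$, $a_k\ne0$, and integer initial values $U_0,\dots,U_{k-1}$ not all zero; its characteristic polynomial is $x^k-a_1x^{k-1}-\cdots-a_k$. Set $\gamma:=\max\{\max_{1\le i\le k}|a_i|,\max_{0\le j\le k-1}|U_j|\}$. Let $S=\{p_1,\dots,p_\ell\}$ be a finite set of distinct primes and $\mathcal U_S$ the set of integers of the form $\pm p_1^{e_1}\cdots p_\ell^{e_\ell}$ with nonnegative integers $e_i$. *)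

theory Defs
  imports "HOL-Computational_Algebra.Computational_Algebra" "HOL-Computational_Algebra.Primes" Complex_Main
begin

definition is_lrs :: "nat \<Rightarrow> (nat \<Rightarrow> int) \<Rightarrow> (nat \<Rightarrow> int) \<Rightarrow> bool" where
  "is_lrs k cf U \<longleftrightarrow> cf k \<noteq> 0 \<and> (\<exists>j<k. U j \<noteq> 0) \<and>
     (\<forall>n\<ge>k. U n = (\<Sum>i=1..k. cf i * U (n - i)))"

definition char_poly :: "nat \<Rightarrow> (nat \<Rightarrow> int) \<Rightarrow> int poly" where
  "char_poly k cf = monom 1 k - (\<Sum>i=1..k. monom (cf i) (k - i))"

definition has_dominant_root :: "nat \<Rightarrow> (nat \<Rightarrow> int) \<Rightarrow> bool" where
  "has_dominant_root k cf \<longleftrightarrow>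
     (\<exists>\<alpha>1::complex. poly (map_poly of_int (char_poly k cf)) \<alpha>1 = 0 \<and>
        (\<forall>\<beta>. poly (map_poly of_int (char_poly k cf)) \<beta> = 0 \<and> \<beta> \<noteq> \<alpha>1 \<longrightarrow> cmod \<beta> < cmod \<alpha>1))"

definition lrs_gamma :: "nat \<Rightarrow> (nat \<Rightarrow> int) \<Rightarrow> (nat \<Rightarrow> int) \<Rightarrow> int" where
  "lrs_gamma k cf U = max (Max ((\<lambda>i. \<bar>cf i\<bar>) ` {1..k})) (Max ((\<lambda>j. \<bar>U j\<bar>) ` {..<k}))"

definition S_units :: "nat set \<Rightarrow> int set" where
  "S_units S = {z. \<exists>e::nat \<Rightarrow> nat. z = (\<Prod>p\<in>S. int p ^ e p) \<or> z = - (\<Prod>p\<in>S. int p ^ e p)}"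

end

theory Submission
  imports Defs
begin

text \<open>The recurrence gives the crude growth bound \<open>\<bar>U n\<bar> \<le> G (k G + 1)^n\<close>
  with \<open>G = max \<gamma> 1\<close>, so the left-hand side \<open>a U\<^sub>n + b U\<^sub>m\<close> is at most \<open>C B^n\<close>.
  On the right-hand side every \<open>z\<^sub>i\<close> with \<open>i < r\<close> is at most \<open>\<bar>z\<^sub>r\<bar>^\<delta>\<close> with
  \<open>\<delta> = 1/(1+\<epsilon>) < 1\<close>, so \<open>\<bar>z\<^sub>r\<bar> \<le> C B^n + (r-1) \<bar>z\<^sub>r\<bar>^\<delta>\<close>; either the first term
  dominates, giving \<open>\<bar>z\<^sub>r\<bar> \<le> 2 C B^n\<close>, or \<open>\<bar>z\<^sub>r\<bar>\<close> is bounded by a constant.\<close>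

lemma lrs_abs_le_exp:
  fixes G :: int
  assumes lrs: "is_lrs k cf U" and cf_le: "\<forall>i\<in>{1..k}. \<bar>cf i\<bar> \<le> G"
    and init_le: "\<forall>j<k. \<bar>U j\<bar> \<le> G" and "G \<ge> 1" and "k \<ge> 1"
  shows "\<bar>U n\<bar> \<le> G * (int k * G + 1) ^ n"
proof (induction n rule: less_induct)
  case (less n)
  define B where "B = int k * G + 1"
  have "B \<ge> 1" using \<open>G \<ge> 1\<close> unfolding B_def by simp
  show ?case
  proof (cases "n < k")
    case True
    have "\<bar>U n\<bar> \<le> G" using init_le True by auto
    also have "G \<le> G * B ^ n" using \<open>G \<ge> 1\<close> \<open>B \<ge> 1\<close> by (simp add: one_le_power)
    finally show ?thesis unfolding B_def .
  next
    case False
    have "U n = (\<Sum>i=1..k. cf i * U (n - i))" using lrs False unfolding is_lrs_def by auto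
    hence "\<bar>U n\<bar> \<le> (\<Sum>i=1..k. \<bar>cf i\<bar> * \<bar>U (n - i)\<bar>)"
      by (simp add: abs_mult[symmetric] sum_abs)
    also have "\<dots> \<le> (\<Sum>i=1..k. G * (G * B ^ (n - 1)))"
    proof (rule sum_mono)
      fix i assume i: "i \<in> {1..k}"
      have "\<bar>U (n - i)\<bar> \<le> G * B ^ (n - i)" using less[of "n - i"] i False unfolding B_def by auto
      also have "\<dots> \<le> G * B ^ (n - 1)"
        using \<open>B \<ge> 1\<close> \<open>G \<ge> 1\<close> i by (intro mult_left_mono power_increasing) auto
      finally show "\<bar>cf i\<bar> * \<bar>U (n - i)\<bar> \<le> G * (G * B ^ (n - 1))"
        using cf_le i by (intro mult_mono) auto
    qed
    also have "\<dots> = (int k * G) * (G * B ^ (n - 1))" by simp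
    also have "\<dots> \<le> B * (G * B ^ (n - 1))"
      using \<open>G \<ge> 1\<close> \<open>B \<ge> 1\<close> unfolding B_def by (intro mult_right_mono) auto
    also have "\<dots> = G * B ^ n"
      using False \<open>k \<ge> 1\<close> by (cases n) (auto simp: algebra_simps)
    finally show ?thesis unfolding B_def .
  qed
qed

lemma lrs_gamma_bounds:
  fixes G :: int
  assumes "G \<ge> lrs_gamma k cf U"
  shows "\<forall>i\<in>{1..k}. \<bar>cf i\<bar> \<le> G" and "\<forall>j<k. \<bar>U j\<bar> \<le> G"
proof -
  have "Max ((\<lambda>i. \<bar>cf i\<bar>) ` {1..k}) \<le> G" and "Max ((\<lambda>j. \<bar>U j\<bar>) ` {..<k}) \<le> G"
    using assms unfolding lrs_gamma_def by auto
  thus "\<forall>i\<in>{1..k}. \<bar>cf i\<bar> \<le> G" and "\<forall>j<k. \<bar>U j\<bar> \<le> G"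
    by (meson Max_ge finite_imageI finite_atLeastAtMost finite_lessThan image_eqI
        lessThan_iff order_trans)+
qed

lemma lrs_lincomb_abs_le_exp:
  fixes a b :: int
  assumes lrs: "is_lrs k cf U" and "k \<ge> 1" and "a \<ge> 0" and "b \<ge> 0" and "m \<le> n"
  defines "G \<equiv> max (lrs_gamma k cf U) 1"
  shows "\<bar>a * U n + b * U m\<bar> \<le> (a + b) * G * (int k * G + 1) ^ n"
proof -
  define B where "B = int k * G + 1"
  have "G \<ge> 1" and "B \<ge> 1" unfolding G_def B_def by auto
  have "G \<ge> lrs_gamma k cf U" unfolding G_def by simp
  have U_le: "\<bar>U j\<bar> \<le> G * B ^ j" for j
    using lrs_abs_le_exp[OF lrs lrs_gamma_bounds[OF \<open>G \<ge> lrs_gamma k cf U\<close>] \<open>G \<ge> 1\<close> \<open>k \<ge> 1\<close>]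
    unfolding B_def .
  have "\<bar>U m\<bar> \<le> G * B ^ m" using U_le .
  also have "\<dots> \<le> G * B ^ n"
    using \<open>G \<ge> 1\<close> \<open>B \<ge> 1\<close> \<open>m \<le> n\<close> by (intro mult_left_mono power_increasing) auto
  finally have "\<bar>U m\<bar> \<le> G * B ^ n" .
  moreover have "\<bar>U n\<bar> \<le> G * B ^ n" using U_le .
  ultimately have "a * \<bar>U n\<bar> + b * \<bar>U m\<bar> \<le> a * (G * B ^ n) + b * (G * B ^ n)"
    using assms(3,4) by (intro add_mono mult_left_mono) auto
  moreover have "\<bar>a * U n + b * U m\<bar> \<le> a * \<bar>U n\<bar> + b * \<bar>U m\<bar>"
    using assms(3,4) by (simp add: abs_mult abs_triangle_ineq[THEN order_trans])
  ultimately show ?thesis unfolding B_def by (simp add: algebra_simps)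
qed

lemma le_twice_or_le_powr:
  fixes x L c \<delta> :: real
  assumes "x \<ge> 0" and "0 < \<delta>" and "\<delta> < 1" and "x \<le> L + c * x powr \<delta>"
  shows "x \<le> 2 * L \<or> x \<le> (2 * c) powr (1 / (1 - \<delta>))"
proof (cases "c * x powr \<delta> \<le> x / 2")
  case True
  thus ?thesis using assms(4) by simp
next
  case False
  hence "x < 2 * c * x powr \<delta>" by simp
  hence "x > 0" using \<open>x \<ge> 0\<close> by (cases "x = 0") auto
  have "x powr (1 - \<delta>) = x / x powr \<delta>" using \<open>x > 0\<close> by (simp add: powr_diff)
  also have "\<dots> < 2 * c"
    using \<open>x < 2 * c * x powr \<delta>\<close> \<open>x > 0\<close> by (simp add: divide_less_eq)
  finally have "x powr (1 - \<delta>) < 2 * c" .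
  have "x = (x powr (1 - \<delta>)) powr (1 / (1 - \<delta>))" using \<open>x > 0\<close> \<open>\<delta> < 1\<close> by (simp add: powr_powr)
  also have "\<dots> \<le> (2 * c) powr (1 / (1 - \<delta>))"
    using \<open>x powr (1 - \<delta>) < 2 * c\<close> \<open>\<delta> < 1\<close> by (intro powr_mono2) auto
  finally show ?thesis by simp
qed

lemma abs_last_le_abs_sum_plus_powr:
  fixes z :: "nat \<Rightarrow> int" and \<epsilon> :: real
  assumes "r \<ge> 1" and "\<epsilon> > 0"
    and small: "\<forall>i\<in>{1..r-1}. real_of_int \<bar>z i\<bar> powr (1 + \<epsilon>) \<le> real_of_int \<bar>z r\<bar>"
  shows "real_of_int \<bar>z r\<bar> \<le>
    real_of_int \<bar>\<Sum>i=1..r. z i\<bar> + (real r - 1) * real_of_int \<bar>z r\<bar> powr (1 / (1 + \<epsilon>))"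
proof -
  define M where "M = real_of_int \<bar>z r\<bar>"
  have z_le: "real_of_int \<bar>z i\<bar> \<le> M powr (1 / (1 + \<epsilon>))" if "i \<in> {1..r-1}" for i
  proof -
    have "real_of_int \<bar>z i\<bar> = (real_of_int \<bar>z i\<bar> powr (1 + \<epsilon>)) powr (1 / (1 + \<epsilon>))"
      using \<open>\<epsilon> > 0\<close> by (cases "z i = 0") (simp_all add: powr_powr)
    also have "\<dots> \<le> M powr (1 / (1 + \<epsilon>))"
      using small that \<open>\<epsilon> > 0\<close> unfolding M_def by (intro powr_mono2) auto
    finally show ?thesis .
  qed
  have split: "(\<Sum>i=1..r. z i) = (\<Sum>i=1..r-1. z i) + z r"
    using \<open>r \<ge> 1\<close> by (cases r) (simp_all add: sum.cl_ivl_Suc)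
  have "M \<le> real_of_int \<bar>\<Sum>i=1..r. z i\<bar> + real_of_int \<bar>\<Sum>i=1..r-1. z i\<bar>"
    unfolding M_def split by linarith
  also have "real_of_int \<bar>\<Sum>i=1..r-1. z i\<bar> \<le> (\<Sum>i=1..r-1. real_of_int \<bar>z i\<bar>)"
    by (metis of_int_le_iff of_int_sum sum_abs)
  also have "\<dots> \<le> (\<Sum>i=1..r-1. M powr (1 / (1 + \<epsilon>)))" using z_le by (intro sum_mono)
  also have "\<dots> = (real r - 1) * M powr (1 / (1 + \<epsilon>))" using \<open>r \<ge> 1\<close> by (simp add: of_nat_diff)
  finally show ?thesis unfolding M_def by simp
qed

lemma abs_last_le_twice_sum_or_const:
  fixes z :: "nat \<Rightarrow> int" and \<epsilon> :: real
  assumes "r \<ge> 1" and "\<epsilon> > 0"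
    and "\<forall>i\<in>{1..r-1}. real_of_int \<bar>z i\<bar> powr (1 + \<epsilon>) \<le> real_of_int \<bar>z r\<bar>"
  shows "real_of_int \<bar>z r\<bar> \<le> 2 * real_of_int \<bar>\<Sum>i=1..r. z i\<bar> \<or>
    real_of_int \<bar>z r\<bar> \<le> (2 * (real r - 1)) powr ((1 + \<epsilon>) / \<epsilon>)"
proof -
  have "1 / (1 - 1 / (1 + \<epsilon>)) = (1 + \<epsilon>) / \<epsilon>" using \<open>\<epsilon> > 0\<close> by (simp add: field_simps)
  thus ?thesis
    using le_twice_or_le_powr[OF _ _ _ abs_last_le_abs_sum_plus_powr[OF assms]] \<open>\<epsilon> > 0\<close>
    by simp
qed

theorem lemma3:
  fixes \<epsilon> :: real and \<gamma> :: int and r k :: nat and a b :: int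
  assumes "\<epsilon> > 0" and "r \<ge> 1" and "k \<ge> 2" and "a > 0" and "b > 0"
  shows "\<exists>c7 c8 :: real. \<forall>(cf :: nat \<Rightarrow> int) (U :: nat \<Rightarrow> int) (S :: nat set)
            (n :: nat) (m :: nat) (z :: nat \<Rightarrow> int).
     is_lrs k cf U \<and> has_dominant_root k cf \<and> lrs_gamma k cf U = \<gamma> \<and>
     finite S \<and> (\<forall>p\<in>S. prime p) \<and>
     n \<ge> m \<and> n \<ge> 1 \<and> (\<forall>i\<in>{1..r}. z i \<in> S_units S) \<and> z r \<noteq> 0 \<and>
     a * U n + b * U m = (\<Sum>i=1..r. z i) \<and>
     (\<forall>i\<in>{1..r-1}. real_of_int \<bar>z i\<bar> powr (1 + \<epsilon>) \<le> real_of_int \<bar>z r\<bar>)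
     \<longrightarrow> ln (real_of_int \<bar>z r\<bar>) < c7 * real n + c8"
proof -
  define G :: int where "G = max \<gamma> 1"
  define B :: real where "B = of_int (int k * G + 1)"
  define C :: real where "C = 2 * of_int ((a + b) * G)"
  define K :: real where "K = max 1 ((2 * (real r - 1)) powr ((1 + \<epsilon>) / \<epsilon>))"
  have "G \<ge> 1" unfolding G_def by simp
  hence "B \<ge> 1" and "C \<ge> 1" and "K \<ge> 1"
    using assms(4,5) unfolding B_def C_def K_def by (auto simp: mult_ge1_I)
  show ?thesis
  proof (intro exI allI impI)
    fix cf U S n m z
    assume H: "is_lrs k cf U \<and> has_dominant_root k cf \<and> lrs_gamma k cf U = \<gamma> \<and>
     finite S \<and> (\<forall>p\<in>S. prime p) \<and>
     n \<ge> m \<and> n \<ge> 1 \<and> (\<forall>i\<in>{1..r}. z i \<in> S_units S) \<and> z r \<noteq> 0 \<and>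
     a * U n + b * U m = (\<Sum>i=1..r. z i) \<and>
     (\<forall>i\<in>{1..r-1}. real_of_int \<bar>z i\<bar> powr (1 + \<epsilon>) \<le> real_of_int \<bar>z r\<bar>)"
    have "\<bar>\<Sum>i=1..r. z i\<bar> \<le> (a + b) * G * (int k * G + 1) ^ n"
      using lrs_lincomb_abs_le_exp[of k cf U a b m n] H assms(3-5) unfolding G_def by auto
    hence "real_of_int \<bar>\<Sum>i=1..r. z i\<bar> \<le> of_int ((a + b) * G) * B ^ n"
      unfolding B_def by (metis of_int_le_iff of_int_mult of_int_power)
    hence "2 * real_of_int \<bar>\<Sum>i=1..r. z i\<bar> \<le> C * B ^ n" unfolding C_def by simp
    moreover have "C * B ^ n \<ge> 1" using \<open>B \<ge> 1\<close> \<open>C \<ge> 1\<close> by (simp add: mult_ge1_I)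
    ultimately have "real_of_int \<bar>z r\<bar> \<le> max (C * B ^ n) K"
      using abs_last_le_twice_sum_or_const[of r \<epsilon> z] assms(1,2) H unfolding K_def by auto
    also have "\<dots> \<le> C * B ^ n * K"
      using \<open>C * B ^ n \<ge> 1\<close> \<open>K \<ge> 1\<close>
      by (auto simp: max_def intro: mult_le_cancel_left1[THEN iffD2] mult_le_cancel_right1[THEN iffD2])
    finally have "real_of_int \<bar>z r\<bar> \<le> C * B ^ n * K" .
    moreover have "real_of_int \<bar>z r\<bar> > 0" using H by simp
    ultimately have "ln (real_of_int \<bar>z r\<bar>) \<le> ln (C * B ^ n * K)" by simp
    also have "\<dots> = ln B * real n + (ln C + ln K)"
      using \<open>B \<ge> 1\<close> \<open>C \<ge> 1\<close> \<open>K \<ge> 1\<close> by (simp add: ln_mult ln_realpow)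
    finally show "ln (real_of_int \<bar>z r\<bar>) < ln B * real n + (ln C + ln K + 1)" by simp
  qed
qed

end
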